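(* Let $n\geq 2$, $\mathfrak g=\mathfrak{sl}(n+1,\mathbb R)$ with the $|1|$-grading $\mathfrak g=\mathfrak g_{-1}\oplus\mathfrak g_0\oplus\mathfrak g_1$ described below, and let $0\neq Z\in\mathfrak g_1$. Then $$0=C(Z)\subset F(Z)=\{X\in\mathfrak g_{-1}: ZX=0\},\qquad T(Z)=\{X\in\mathfrak g_{-1}: ZX=1\}.$$ Moreover, for every $X\in T(Z)$ the element $A=[Z,X]\in\mathfrak g_0$ acts diagonalizably on $\mathfrak g_{-1}$ and on $\mathbb W$, and: (1) for each $X\in T(Z)$ all eigenvalues of $A$ on $\mathfrak g_{-1}$ are non-positive and the $0$-eigenspace of $A$ on $\mathfrak g_{-1}$ coincides with $C(Z)$; (2) for each $X\in T(Z)$, $\mathbb W_{ss}(A)=0$; (3) $\bigcap_{X\in T(Z)}\mathbb W_{st}(A)=0$.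
   Context: Write elements of $\mathfrak{sl}(n+1,\mathbb R)$ in block form with blocks of sizes $1$ and $n$ as $\begin{pmatrix}-\mathrm{tr}(A) & Z\\ X & A\end{pmatrix}$ with $X\in\mathbb R^n$ (column), $A\in\mathfrak{gl}(n,\mathbb R)$, $Z\in\mathbb R^{n*}$ (row). The grading components $\mathfrak g_{-1},\mathfrak g_0,\mathfrak g_1$ are the parts given by $X$, $A$ and $Z$ respectively, and the bracket is the matrix commutator; for $Z\in\mathfrak g_1$, $X\in\mathfrak g_{-1}$, $ZX$ denotes the real number given by the matrix product. For $Z\in\mathfrak g_1$ define $C(Z)=\{X\in\mathfrak g_{-1}:[X,Z]=0\}$, $F(Z)=\{X\in\mathfrak g_{-1}:[X,[X,Z]]=0\}$, and $T(Z)=\{X\in\mathfrak g_{-1}:[[Z,X],X]=-2X,\ [[Z,X],Z]=2Z\}$. The group $G_0\cong GL(n,\mathbb R)$ acts on $\mathfrak g_{\pm1}$ by the adjoint action. $\mathbb W$ denotes the representation of $\mathfrak g_0$ in which the harmonic curvature of projective structures takes values: for $n>2$ it is the subrepresentation of $\Lambda^2\mathfrak g_1\otimes\mathfrak{sl}(\mathfrak g_{-1})$ of projective Weyl curvature tensors (totally trace-free curvature-type tensors); for $n=2$ it is the subrepresentation of $\Lambda^2\mathfrak g_1\otimes\mathfrak g_1$ in which the projective Cotton–York tensor takes values. For $A\in\mathfrak g_0$ acting diagonalizably on a representation $\mathbb W$, $\mathbb W_{ss}(A)$ (resp. $\mathbb W_{st}(A)$) is the sum of eigenspaces of $A$ with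 negative (resp. non-positive) eigenvalues. *)

theory Defs
  imports "HOL-Analysis.Analysis"
begin

text \<open>The Lie algebra sl(n+1,R) realised as trace-free matrices indexed by the type
  'n option, where None is the index of the 1-block and Some a (a :: 'n) run
  through the n-block.  Elements of g_{-1} are columns X :: real^'n, elements of g_1
  are rows Z :: real^'n, elements of g_0 are A :: real^'n^'n.\<close>

definition blk :: "real^'n \<Rightarrow> real^'n^'n \<Rightarrow> real^'n \<Rightarrow> real^('n::finite option)^('n option)" where
  "blk X A Z = (\<chi> i j. case i of
       None \<Rightarrow> (case j of None \<Rightarrow> - trace A | Some b \<Rightarrow> Z $ b)
     | Some a \<Rightarrow> (case j of None \<Rightarrow> X $ a | Some b \<Rightarrow> A $ a $ b))"

definition gm1 :: "real^'n \<Rightarrow> real^('n::finite option)^('n option)" where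
  "gm1 X = blk X 0 0"

definition g1 :: "real^'n \<Rightarrow> real^('n::finite option)^('n option)" where
  "g1 Z = blk 0 0 Z"

definition brk :: "real^'m^'m \<Rightarrow> real^'m^'m \<Rightarrow> real^'m::finite^'m" where
  "brk M N = M ** N - N ** M"

text \<open>ZX: the real number given by the matrix product of the row Z and the column X.\<close>
definition pair :: "real^'n \<Rightarrow> real^'n::finite \<Rightarrow> real" where
  "pair Z X = (\<Sum>i\<in>UNIV. Z $ i * X $ i)"

definition Cset :: "real^'n \<Rightarrow> (real^'n::finite) set" where
  "Cset Z = {X. brk (gm1 X) (g1 Z) = 0}"

definition Fset :: "real^'n \<Rightarrow> (real^'n::finite) set" where
  "Fset Z = {X. brk (gm1 X) (brk (gm1 X) (g1 Z)) = 0}"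

definition Tset :: "real^'n \<Rightarrow> (real^'n::finite) set" where
  "Tset Z = {X. brk (brk (g1 Z) (gm1 X)) (gm1 X) = - 2 *\<^sub>R gm1 X
              \<and> brk (brk (g1 Z) (gm1 X)) (g1 Z) = 2 *\<^sub>R g1 Z}"

definition minus1_part :: "real^('n::finite option)^('n option) \<Rightarrow> real^'n" where
  "minus1_part M = (\<chi> a. M $ Some a $ None)"

definition ad_m1 :: "real^('n::finite option)^('n option) \<Rightarrow> real^'n \<Rightarrow> real^'n" where
  "ad_m1 M Y = minus1_part (brk M (gm1 Y))"

definition ad_m1_mat :: "real^('n::finite option)^('n option) \<Rightarrow> real^'n^'n" where
  "ad_m1_mat M = (\<chi> k m. ad_m1 M (axis m 1) $ k)"

text \<open>Elements of Lambda^2 g_1 (x) gl(g_{-1}) are identified (via the invariant pairing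
  g_1 = g_{-1}^* given by ZX) with component arrays R$i$j$k$l = R_{ij}^k_l, i.e. the k-th
  component of R(e_i,e_j)(e_l).  Induced g_0 action, with B the matrix of ad on g_{-1}.\<close>
definition act_weyl :: "real^'n^'n \<Rightarrow> real^'n^'n^'n^'n \<Rightarrow> real^'n^'n^'n^('n::finite)" where
  "act_weyl B R = (\<chi> i j k l.
       (\<Sum>m\<in>UNIV. B$k$m * R$i$j$m$l) - (\<Sum>m\<in>UNIV. B$m$i * R$m$j$k$l)
     - (\<Sum>m\<in>UNIV. B$m$j * R$i$m$k$l) - (\<Sum>m\<in>UNIV. B$m$l * R$i$j$k$m))"

text \<open>Projective Weyl curvature tensors: skew in i j, algebraic Bianchi identity,
  totally trace-free (values in sl(g_{-1}); Ricci-type contraction vanishes).\<close>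
definition Weyl_space :: "(real^'n^'n^'n^('n::finite)) set" where
  "Weyl_space = {R. (\<forall>i j k l. R$i$j$k$l = - R$j$i$k$l)
      \<and> (\<forall>i j k l. R$i$j$k$l + R$j$l$k$i + R$l$i$k$j = 0)
      \<and> (\<forall>i j. (\<Sum>k\<in>UNIV. R$i$j$k$k) = 0)
      \<and> (\<forall>j l. (\<Sum>k\<in>UNIV. R$k$j$k$l) = 0)
      \<and> (\<forall>i l. (\<Sum>k\<in>UNIV. R$i$k$k$l) = 0)}"

text \<open>Elements of Lambda^2 g_1 (x) g_1 as arrays C$i$j$l = C_{ijl}, skew in i j;
  Cotton-York type tensors also satisfy the cyclic identity (automatic for n = 2).\<close>
definition act_cotton :: "real^'n^'n \<Rightarrow> real^'n^'n^'n \<Rightarrow> real^'n^'n^('n::finite)" where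
  "act_cotton B C = (\<chi> i j l.
       - (\<Sum>m\<in>UNIV. B$m$i * C$m$j$l) - (\<Sum>m\<in>UNIV. B$m$j * C$i$m$l)
       - (\<Sum>m\<in>UNIV. B$m$l * C$i$j$m))"

definition Cotton_space :: "(real^'n^'n^('n::finite)) set" where
  "Cotton_space = {C. (\<forall>i j l. C$i$j$l = - C$j$i$l)
      \<and> (\<forall>i j l. C$i$j$l + C$j$l$i + C$l$i$j = 0)}"

definition diagonalizable_on :: "'v::real_vector set \<Rightarrow> ('v \<Rightarrow> 'v) \<Rightarrow> bool" where
  "diagonalizable_on S f \<longleftrightarrow> S \<subseteq> span {v\<in>S. \<exists>c. f v = c *\<^sub>R v}"

definition W_ss :: "'v::real_vector set \<Rightarrow> ('v \<Rightarrow> 'v) \<Rightarrow> 'v set" where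
  "W_ss S f = span {v\<in>S. \<exists>c<0. f v = c *\<^sub>R v}"

definition W_st :: "'v::real_vector set \<Rightarrow> ('v \<Rightarrow> 'v) \<Rightarrow> 'v set" where
  "W_st S f = span {v\<in>S. \<exists>c\<le>0. f v = c *\<^sub>R v}"

end

theory Submission
  imports Defs
begin

text \<open>For \<open>Z X = 1\<close> the element \<open>A = [Z, X]\<close> acts on \<open>g_{-1}\<close> as \<open>-2 + (1 - X Z)\<close>,
  where \<open>1 - X Z\<close> is the projection onto \<open>ker Z\<close> along \<open>X\<close>. Hence on any tensor
  space built from \<open>g_{\<plusminus>1}\<close> it acts as a multiple \<open>c\<close> of the identity plus a sum of
  \<open>k\<close> commuting projections, one per slot. Such a map is killed by
  \<open>(t - c)(t - c - 1)\<cdots>(t - c - k)\<close>, a polynomial with simple roots, so it is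
  diagonalizable with eigenvalues in \<open>{c, \<dots>, c + k}\<close>. On \<open>g_{-1}\<close> this gives the
  eigenvalues \<open>-1, -2\<close>; on Weyl tensors \<open>c = 1\<close> and on Cotton-York tensors \<open>c = 3\<close>, so
  all eigenvalues there are positive and \<open>W_{ss}\<close>, \<open>W_{st}\<close> vanish.\<close>

text \<open>\<open>roots_op L f\<close> is \<open>p(f)\<close> for the polynomial \<open>p\<close> whose roots are listed in \<open>L\<close>.\<close>
fun roots_op :: "real list \<Rightarrow> ('v::real_vector \<Rightarrow> 'v) \<Rightarrow> 'v \<Rightarrow> 'v" where
  "roots_op [] f v = v"
| "roots_op (m # L) f v = f (roots_op L f v) - m *\<^sub>R roots_op L f v"

lemma linear_roots_op: "linear f \<Longrightarrow> linear (roots_op L f)"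
  by (induction L) (auto intro!: linearI simp: linear_add linear_scale algebra_simps)

lemma roots_op_commute:
  assumes "linear g" "\<And>v. g (f v) = f (g v)"
  shows "g (roots_op L f v) = roots_op L f (g v)"
  using assms by (induction L) (auto simp: linear_diff linear_scale)

lemma roots_op_eigenvector:
  "linear f \<Longrightarrow> f u = c *\<^sub>R u \<Longrightarrow> roots_op L f u = (\<Prod>m\<leftarrow>L. c - m) *\<^sub>R u"
  by (induction L) (auto simp: linear_scale algebra_simps)

lemma roots_op_in_subspace:
  "subspace S \<Longrightarrow> (\<And>v. v \<in> S \<Longrightarrow> f v \<in> S) \<Longrightarrow> v \<in> S \<Longrightarrow> roots_op L f v \<in> S"
  by (induction L) (auto intro!: subspace_diff subspace_scale)

lemma roots_op_append: "roots_op (L @ L') f v = roots_op L f (roots_op L' f v)"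
  by (induction L) auto

lemma roots_op_add_id: "roots_op L (\<lambda>v. f v + v) v = roots_op (map (\<lambda>m. m - 1) L) f v"
  by (induction L) (auto simp: algebra_simps)

lemma eigenvalue_mem_roots:
  assumes "linear f" "\<And>v. roots_op L f v = 0" "f v = c *\<^sub>R v" "v \<noteq> 0"
  shows "c \<in> set L"
proof -
  have "(\<Prod>m\<leftarrow>L. c - m) *\<^sub>R v = 0"
    using roots_op_eigenvector[OF assms(1,3), of L] assms(2) by simp
  then show ?thesis using assms(4) by (auto simp: prod_list_zero_iff)
qed

text \<open>Lagrange interpolation in its simplest form: if \<open>(f - m) u = 0\<close> with
  \<open>u = p(f) v\<close>, then \<open>v - u / p(m)\<close> is killed by \<open>p(f)\<close>.\<close>
lemma roots_op_zero_imp_in_eigenspan: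
  assumes "distinct L" "linear f" "subspace S" "\<And>v. v \<in> S \<Longrightarrow> f v \<in> S"
  shows "v \<in> S \<Longrightarrow> roots_op L f v = 0 \<Longrightarrow> v \<in> span {v\<in>S. \<exists>c. f v = c *\<^sub>R v}"
  using assms(1)
proof (induction L arbitrary: v)
  case Nil
  then show ?case by (simp add: span_zero)
next
  case (Cons m L)
  define u where "u = roots_op L f v"
  define p where "p = (\<Prod>x\<leftarrow>L. m - x)"
  have "u \<in> S" unfolding u_def by (rule roots_op_in_subspace[OF assms(3,4) Cons.prems(1)])
  have eigen_u: "f u = m *\<^sub>R u" using Cons.prems(2) by (simp add: u_def)
  have "p \<noteq> 0" using Cons.prems(3) by (auto simp: p_def prod_list_zero_iff)
  define w where "w = v - (1 / p) *\<^sub>R u"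
  have lin: "linear (roots_op L f)" by (rule linear_roots_op[OF assms(2)])
  have "roots_op L f w = u - (1 / p) *\<^sub>R (p *\<^sub>R u)"
    using roots_op_eigenvector[OF assms(2) eigen_u, of L]
    by (simp add: w_def linear_diff[OF lin] linear_scale[OF lin] u_def p_def)
  with \<open>p \<noteq> 0\<close> have "roots_op L f w = 0" by simp
  moreover have "w \<in> S" using Cons.prems(1) \<open>u \<in> S\<close> assms(3)
    by (simp add: w_def subspace_diff subspace_scale)
  ultimately have "w \<in> span {v\<in>S. \<exists>c. f v = c *\<^sub>R v}" using Cons by auto
  moreover have "u \<in> span {v\<in>S. \<exists>c. f v = c *\<^sub>R v}"
    using \<open>u \<in> S\<close> eigen_u by (intro span_base) auto
  ultimately have "w + (1 / p) *\<^sub>R u \<in> span {v\<in>S. \<exists>c. f v = c *\<^sub>R v}"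
    by (intro span_add span_mul)
  then show ?case by (simp add: w_def)
qed

lemma diagonalizable_on_if_roots_op_zero:
  assumes "distinct L" "linear f" "subspace S" "\<And>v. v \<in> S \<Longrightarrow> f v \<in> S"
    and "\<And>v. roots_op L f v = 0"
  shows "diagonalizable_on S f"
  unfolding diagonalizable_on_def using roots_op_zero_imp_in_eigenspan[OF assms(1-4)] assms(5)
  by blast

definition consecutive_roots :: "real \<Rightarrow> nat \<Rightarrow> real list" where
  "consecutive_roots c k = map (\<lambda>j. c + real j) (rev [0..<Suc k])"

lemma consecutive_roots_Suc:
  "consecutive_roots c (Suc k) = (c + real (Suc k)) # consecutive_roots c k"
  by (simp add: consecutive_roots_def)

lemma consecutive_roots_shift:
  "map (\<lambda>m. m - 1) (consecutive_roots c (Suc k)) = consecutive_roots c k @ [c - 1]"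
  by (induction k) (auto simp: consecutive_roots_def)

lemma distinct_consecutive_roots: "distinct (consecutive_roots c k)"
  by (auto simp: consecutive_roots_def distinct_map inj_on_def)

lemma set_consecutive_roots: "set (consecutive_roots c k) \<subseteq> {c..c + real k}"
  by (auto simp: consecutive_roots_def)

text \<open>On the range of the projection \<open>e\<close> the map \<open>f + e\<close> acts as \<open>f + 1\<close>,
  on its kernel as \<open>f\<close>.\<close>
lemma roots_op_add_projection:
  assumes f: "linear f" and e: "linear e" "\<And>v. e (e v) = e v" "\<And>v. e (f v) = f (e v)"
  shows "roots_op L (\<lambda>v. f v + e v) v = roots_op L (\<lambda>v. f v + v) (e v) + roots_op L f (v - e v)"
proof (induction L)
  case Nil
  then show ?case by simp
next
  case (Cons m L)
  have "e (roots_op L (\<lambda>v. f v + v) x) = roots_op L (\<lambda>v. f v + v) (e x)" for x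
    by (rule roots_op_commute) (simp_all add: e linear_add[OF e(1)])
  moreover have "e (roots_op L f (v - e v)) = 0"
    using roots_op_commute[OF e(1), of f L] e
    by (simp add: linear_diff[OF e(1)] linear_0[OF linear_roots_op[OF f]])
  ultimately show ?case
    by (simp only: roots_op.simps Cons linear_add[OF f] linear_add[OF e(1)] e(2))
      (simp add: algebra_simps)
qed

lemma roots_op_add_projection_zero:
  assumes f: "linear f" and e: "linear e" "\<And>v. e (e v) = e v" "\<And>v. e (f v) = f (e v)"
    and zero: "\<And>v. roots_op (consecutive_roots c k) f v = 0"
  shows "roots_op (consecutive_roots c (Suc k)) (\<lambda>v. f v + e v) v = 0"
proof -
  have "roots_op (consecutive_roots c (Suc k)) (\<lambda>v. f v + v) (e v) = 0"
    by (simp add: roots_op_add_id consecutive_roots_shift roots_op_append zero)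
  moreover have "roots_op (consecutive_roots c (Suc k)) f (v - e v) = 0"
    by (simp add: consecutive_roots_Suc zero linear_0[OF f])
  moreover have "roots_op (consecutive_roots c (Suc k)) (\<lambda>v. f v + e v) v
      = roots_op (consecutive_roots c (Suc k)) (\<lambda>v. f v + v) (e v)
        + roots_op (consecutive_roots c (Suc k)) f (v - e v)"
    by (rule roots_op_add_projection) (fact f e)+
  ultimately show ?thesis by simp
qed

lemma linear_sum_list_apply: "\<forall>e\<in>set es. linear e \<Longrightarrow> linear (\<lambda>v. \<Sum>e\<leftarrow>es. e v)"
  by (induction es) (auto intro: linear_compose_add linear_zero)

lemma linear_sum_list_apply_commute:
  "linear g \<Longrightarrow> \<forall>e\<in>set es. \<forall>v. g (e v) = e (g v) \<Longrightarrow> g (\<Sum>e\<leftarrow>es. e v) = (\<Sum>e\<leftarrow>es. e (g v))"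
  by (induction es) (auto simp: linear_add linear_0)

lemma roots_op_scaled_id_plus_projections:
  assumes proj: "\<forall>e\<in>set es. linear e \<and> (\<forall>v. e (e v) = e v)"
    and comm: "\<forall>e\<in>set es. \<forall>e'\<in>set es. \<forall>v. e (e' v) = e' (e v)"
  shows "roots_op (consecutive_roots c (length es)) (\<lambda>v. c *\<^sub>R v + (\<Sum>e\<leftarrow>es. e v)) v = 0"
  using assms
proof (induction es arbitrary: v)
  case Nil
  then show ?case by (simp add: consecutive_roots_def)
next
  case (Cons e es)
  let ?f = "\<lambda>v. c *\<^sub>R v + (\<Sum>e\<leftarrow>es. e v)"
  have lin_e: "linear e" and idem: "\<And>v. e (e v) = e v" using Cons.prems(1) by auto
  have lin_f: "linear ?f"
    using Cons.prems(1) by (intro linear_compose_add linear_scaleR linear_sum_list_apply) auto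
  have comm_f: "e (?f v) = ?f (e v)" for v
    using Cons.prems(2) linear_sum_list_apply_commute[OF lin_e, of es v]
    by (simp add: linear_add[OF lin_e] linear_scale[OF lin_e])
  have IH: "roots_op (consecutive_roots c (length es)) ?f v = 0" for v
    using Cons by simp
  have "roots_op (consecutive_roots c (Suc (length es))) (\<lambda>v. ?f v + e v) v = 0"
    by (rule roots_op_add_projection_zero) (fact lin_f lin_e idem comm_f IH)+
  moreover have "(\<lambda>v. c *\<^sub>R v + (\<Sum>e\<leftarrow>e # es. e v)) = (\<lambda>v. ?f v + e v)"
    by (simp add: fun_eq_iff add_ac)
  ultimately show ?case by simp
qed

lemma scaled_id_plus_projections_spectrum:
  assumes f: "\<And>v. f v = c *\<^sub>R v + (\<Sum>e\<leftarrow>es. e v)"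
    and S: "subspace S" "f ` S \<subseteq> S"
    and proj: "\<forall>e\<in>set es. linear e \<and> (\<forall>v. e (e v) = e v)"
    and comm: "\<forall>e\<in>set es. \<forall>e'\<in>set es. \<forall>v. e (e' v) = e' (e v)"
  shows "diagonalizable_on S f"
    and "v \<noteq> 0 \<Longrightarrow> f v = \<mu> *\<^sub>R v \<Longrightarrow> \<mu> \<in> {c..c + real (length es)}"
proof -
  have f_eq: "f = (\<lambda>v. c *\<^sub>R v + (\<Sum>e\<leftarrow>es. e v))"
    using f by blast
  have lin: "linear f"
    unfolding f_eq using proj by (intro linear_compose_add linear_scaleR linear_sum_list_apply) auto
  have zero: "roots_op (consecutive_roots c (length es)) f v = 0" for v
    unfolding f_eq by (rule roots_op_scaled_id_plus_projections[OF proj comm])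
  show "diagonalizable_on S f"
    using S by (intro diagonalizable_on_if_roots_op_zero[OF distinct_consecutive_roots lin _ _ zero]) auto
  show "\<mu> \<in> {c..c + real (length es)}" if "v \<noteq> 0" "f v = \<mu> *\<^sub>R v"
    using eigenvalue_mem_roots[OF lin zero that(2,1)] set_consecutive_roots by blast
qed

lemma W_ss_W_st_eq_zero_if_eigenvalues_pos:
  assumes "\<And>v \<mu>. v \<in> S \<Longrightarrow> v \<noteq> 0 \<Longrightarrow> f v = \<mu> *\<^sub>R v \<Longrightarrow> \<mu> > 0"
  shows "W_ss S f = {0}" and "W_st S f = {0}"
proof -
  have "{v\<in>S. \<exists>c\<le>0. f v = c *\<^sub>R v} \<subseteq> {0}"
    using assms by (auto simp flip: not_le)
  then have "W_st S f \<subseteq> {0}"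
    unfolding W_st_def using span_mono[of _ "{0}"] by auto
  moreover have "W_ss S f \<subseteq> W_st S f"
    unfolding W_ss_def W_st_def by (rule span_mono) (auto intro: less_imp_le)
  ultimately show "W_ss S f = {0}" and "W_st S f = {0}"
    unfolding W_ss_def W_st_def using span_zero by auto
qed

lemma sum_UNIV_option:
  "(\<Sum>k\<in>(UNIV::'a::finite option set). f k) = f None + (\<Sum>a\<in>UNIV. f (Some a))"
  by (simp add: UNIV_option_conv sum.reindex)

lemma gm1_g1_nth:
  "gm1 X $ None $ j = 0" "gm1 X $ Some a $ None = X $ a" "gm1 X $ Some a $ Some b = 0"
  "g1 Z $ i $ None = 0" "g1 Z $ None $ Some b = Z $ b" "g1 Z $ Some a $ k = 0"
  by (cases j; cases i; cases k; simp add: gm1_def g1_def blk_def trace_def)+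

lemma brk_g1_gm1_nth:
  "brk (g1 Z) (gm1 X) $ None $ None = pair Z X"
  "brk (g1 Z) (gm1 X) $ None $ Some b = 0"
  "brk (g1 Z) (gm1 X) $ Some a $ None = 0"
  "brk (g1 Z) (gm1 X) $ Some a $ Some b = - (X $ a * Z $ b)"
  by (simp_all add: brk_def matrix_matrix_mult_def sum_UNIV_option gm1_g1_nth pair_def)

lemma brk_brk_g1_gm1_gm1_nth:
  "brk (brk (g1 Z) (gm1 X)) (gm1 Y) $ None $ j = 0"
  "brk (brk (g1 Z) (gm1 X)) (gm1 Y) $ Some a $ Some b = 0"
  "brk (brk (g1 Z) (gm1 X)) (gm1 Y) $ Some a $ None = - (pair Z Y * X $ a) - pair Z X * Y $ a"
  by (cases j; simp add: brk_def[of "brk _ _"] matrix_matrix_mult_def sum_UNIV_option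
      gm1_g1_nth brk_g1_gm1_nth pair_def sum_distrib_left sum_distrib_right sum_negf mult_ac)+

lemma brk_brk_g1_gm1_g1_nth:
  "brk (brk (g1 Z) (gm1 X)) (g1 Z) $ None $ None = 0"
  "brk (brk (g1 Z) (gm1 X)) (g1 Z) $ Some a $ j = 0"
  "brk (brk (g1 Z) (gm1 X)) (g1 Z) $ None $ Some b = 2 * pair Z X * Z $ b"
  by (cases j; simp add: brk_def[of "brk _ _"] matrix_matrix_mult_def sum_UNIV_option
      gm1_g1_nth brk_g1_gm1_nth pair_def sum_distrib_left sum_distrib_right sum_negf mult_ac)+

lemma matrix_option_eq_iff:
  "(M::real^('n::finite option)^('n option)) = M' \<longleftrightarrow>
     M $ None $ None = M' $ None $ None \<and> (\<forall>b. M $ None $ Some b = M' $ None $ Some b)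
   \<and> (\<forall>a. M $ Some a $ None = M' $ Some a $ None) \<and> (\<forall>a b. M $ Some a $ Some b = M' $ Some a $ Some b)"
  by (simp add: vec_eq_iff split_option_all) blast

lemma pair_0 [simp]: "pair Z 0 = 0"
  by (simp add: pair_def)

lemma pair_add: "pair Z (x + y) = pair Z x + pair Z y"
  by (simp add: pair_def algebra_simps sum.distrib)

lemma pair_diff: "pair Z (x - y) = pair Z x - pair Z y"
  by (simp add: pair_def algebra_simps sum_subtractf)

lemma pair_scaleR: "pair Z (c *\<^sub>R x) = c * pair Z x"
  by (simp add: pair_def algebra_simps sum_distrib_left)

lemma pair_commute: "pair X Z = pair Z X"
  by (simp add: pair_def mult_ac)

lemma pair_axis: "pair Z (axis m c) = c * Z $ m"
  by (simp add: pair_def axis_def if_distrib[of "\<lambda>x. _ * x"] cong: if_cong)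

lemma Cset_eq:
  assumes "Z \<noteq> 0" shows "Cset Z = {0}"
proof -
  obtain b where b: "Z $ b \<noteq> 0" using assms by (auto simp: vec_eq_iff)
  have "brk (gm1 X) (g1 Z) = 0 \<longleftrightarrow> brk (g1 Z) (gm1 X) = 0" for X
    by (metis brk_def minus_diff_eq neg_equal_0_iff_equal)
  also have "\<dots> X \<longleftrightarrow> X = 0" for X
    using b by (auto simp: matrix_option_eq_iff brk_g1_gm1_nth vec_eq_iff pair_def)
  finally show ?thesis by (auto simp: Cset_def)
qed

lemma Fset_eq: "Fset Z = {X. pair Z X = 0}"
proof -
  have "brk (gm1 X) (brk (gm1 X) (g1 Z)) = brk (brk (g1 Z) (gm1 X)) (gm1 X)" for X
    by (simp add: brk_def matrix_matrix_mult_def vec_eq_iff sum_subtractf algebra_simps)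
  then have "X \<in> Fset Z \<longleftrightarrow> (\<forall>a. pair Z X * X $ a = 0)" for X
    by (simp add: Fset_def matrix_option_eq_iff brk_brk_g1_gm1_gm1_nth)
  moreover have "(\<forall>a. pair Z X * X $ a = 0) \<longleftrightarrow> pair Z X = 0" for X
    by (metis mult_eq_0_iff pair_0 vec_eq_iff zero_index)
  ultimately show ?thesis by blast
qed

lemma Tset_eq:
  assumes "Z \<noteq> 0" shows "Tset Z = {X. pair Z X = 1}"
proof -
  obtain b where b: "Z $ b \<noteq> 0" using assms by (auto simp: vec_eq_iff)
  have "X \<in> Tset Z \<longleftrightarrow> (\<forall>a. pair Z X * X $ a = X $ a) \<and> (\<forall>b. pair Z X * Z $ b = Z $ b)" for X
    by (simp add: Tset_def matrix_option_eq_iff brk_brk_g1_gm1_gm1_nth brk_brk_g1_gm1_g1_nth gm1_g1_nth)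
  moreover have "(\<forall>b. pair Z X * Z $ b = Z $ b) \<longleftrightarrow> pair Z X = 1" for X
    using b by (metis mult_cancel_right2)
  ultimately show ?thesis by auto
qed

lemma ad_m1_brk_g1_gm1:
  "ad_m1 (brk (g1 Z) (gm1 X)) Y = - pair Z Y *\<^sub>R X - pair Z X *\<^sub>R Y"
  by (simp add: ad_m1_def minus1_part_def brk_brk_g1_gm1_gm1_nth vec_eq_iff)

lemma ad_m1_mat_brk_g1_gm1:
  "ad_m1_mat (brk (g1 Z) (gm1 X)) $ k $ m = - (Z $ m * X $ k) - (if k = m then pair Z X else 0)"
  by (simp add: ad_m1_mat_def ad_m1_brk_g1_gm1 pair_axis) (simp add: axis_def)

lemma ad_m1_eq_scaled_id_plus_projection:
  assumes "pair Z X = 1"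
  shows "ad_m1 (brk (g1 Z) (gm1 X)) Y = (-2) *\<^sub>R Y + (\<Sum>e\<leftarrow>[\<lambda>Y. Y - pair Z Y *\<^sub>R X]. e Y)"
  using assms by (simp add: vec_eq_iff ad_m1_brk_g1_gm1 algebra_simps)

lemma ad_m1_spectrum:
  assumes "pair Z X = 1"
  shows "diagonalizable_on UNIV (ad_m1 (brk (g1 Z) (gm1 X)))"
    and "v \<noteq> 0 \<Longrightarrow> ad_m1 (brk (g1 Z) (gm1 X)) v = c *\<^sub>R v \<Longrightarrow> c \<in> {-2..-1}"
proof -
  let ?P = "\<lambda>Y. Y - pair Z Y *\<^sub>R X"
  have "linear ?P"
    by (intro linearI) (simp_all add: pair_add pair_scaleR algebra_simps)
  moreover have "?P (?P Y) = ?P Y" for Y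
    using assms by (simp add: pair_diff pair_scaleR)
  ultimately have proj: "\<forall>e\<in>set [?P]. linear e \<and> (\<forall>v. e (e v) = e v)" by simp
  have comm: "\<forall>e\<in>set [?P]. \<forall>e'\<in>set [?P]. \<forall>v. e (e' v) = e' (e v)" by simp
  note spectrum = scaled_id_plus_projections_spectrum[OF
      ad_m1_eq_scaled_id_plus_projection[OF assms] subspace_UNIV subset_UNIV proj comm]
  show "diagonalizable_on UNIV (ad_m1 (brk (g1 Z) (gm1 X)))"
    by (rule spectrum(1))
  show "c \<in> {-2..-1}" if "v \<noteq> 0" "ad_m1 (brk (g1 Z) (gm1 X)) v = c *\<^sub>R v"
    using spectrum(2)[OF that] by simp
qed

text \<open>The slot-wise projections into which \<open>[Z, X]\<close> splits for \<open>Z X = 1\<close>: in a lower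
  (\<open>g_1\<close>) slot contract with \<open>X\<close> and multiply by \<open>Z\<close>; in the upper (\<open>g_{-1}\<close>) slot apply
  \<open>1 - X Z\<close>.\<close>
definition weyl_projections ::
  "real^'n \<Rightarrow> real^'n \<Rightarrow> (real^'n^'n^'n^('n::finite) \<Rightarrow> real^'n^'n^'n^'n) list" where
  "weyl_projections X Z =
    [\<lambda>R. \<chi> i j k l. Z $ i * (\<Sum>m\<in>UNIV. X $ m * R $ m $ j $ k $ l),
     \<lambda>R. \<chi> i j k l. Z $ j * (\<Sum>m\<in>UNIV. X $ m * R $ i $ m $ k $ l),
     \<lambda>R. \<chi> i j k l. Z $ l * (\<Sum>m\<in>UNIV. X $ m * R $ i $ j $ k $ m),
     \<lambda>R. \<chi> i j k l. R $ i $ j $ k $ l - X $ k * (\<Sum>m\<in>UNIV. Z $ m * R $ i $ j $ m $ l)]"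

definition cotton_projections ::
  "real^'n \<Rightarrow> real^'n \<Rightarrow> (real^'n^'n^('n::finite) \<Rightarrow> real^'n^'n^'n) list" where
  "cotton_projections X Z =
    [\<lambda>C. \<chi> i j l. Z $ i * (\<Sum>m\<in>UNIV. X $ m * C $ m $ j $ l),
     \<lambda>C. \<chi> i j l. Z $ j * (\<Sum>m\<in>UNIV. X $ m * C $ i $ m $ l),
     \<lambda>C. \<chi> i j l. Z $ l * (\<Sum>m\<in>UNIV. X $ m * C $ i $ j $ m)]"

lemma act_weyl_eq_id_plus_projections:
  assumes "pair Z X = 1"
  shows "act_weyl (ad_m1_mat (brk (g1 Z) (gm1 X))) R = 1 *\<^sub>R R + (\<Sum>e\<leftarrow>weyl_projections X Z. e R)"
  using assms
  by (simp add: vec_eq_iff act_weyl_def ad_m1_mat_brk_g1_gm1 weyl_projections_def algebra_simps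
      sum_subtractf sum.distrib sum_distrib_left sum_negf if_distrib[of "\<lambda>x. x * _"] cong: if_cong)

lemma act_cotton_eq_id_plus_projections:
  assumes "pair Z X = 1"
  shows "act_cotton (ad_m1_mat (brk (g1 Z) (gm1 X))) C = 3 *\<^sub>R C + (\<Sum>e\<leftarrow>cotton_projections X Z. e C)"
  using assms
  by (simp add: vec_eq_iff act_cotton_def ad_m1_mat_brk_g1_gm1 cotton_projections_def algebra_simps
      sum_subtractf sum.distrib sum_distrib_left sum_negf if_distrib[of "\<lambda>x. x * _"] cong: if_cong)

lemma sum_contract_pair:
  "(\<Sum>m\<in>UNIV. X $ m * (Z $ m * s)) = pair Z X * s"
  "(\<Sum>m\<in>UNIV. Z $ m * (X $ m * s)) = pair Z X * s"
  by (simp add: pair_def sum_distrib_right; simp add: mult_ac)+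

lemma weyl_projections_projections:
  assumes "pair Z X = 1"
  shows "\<forall>e\<in>set (weyl_projections X Z). linear e \<and> (\<forall>v. e (e v) = e v)"
proof -
  have "\<forall>e\<in>set (weyl_projections X Z). linear e"
    unfolding weyl_projections_def
    by (auto intro!: linearI simp: vec_eq_iff algebra_simps sum.distrib sum_distrib_left)
  moreover have "\<forall>e\<in>set (weyl_projections X Z). \<forall>v. e (e v) = e v"
    using assms unfolding weyl_projections_def
    by (simp add: vec_eq_iff sum_contract_pair right_diff_distrib sum_subtractf pair_commute[of X])
  ultimately show ?thesis by blast
qed

lemma weyl_projections_commute:
  "\<forall>e\<in>set (weyl_projections X Z). \<forall>e'\<in>set (weyl_projections X Z). \<forall>v. e (e' v) = e' (e v)"
  unfolding weyl_projections_def
  by (simp add: vec_eq_iff sum_distrib_left right_diff_distrib sum_subtractf)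
    (intro conjI allI; subst sum.swap; simp add: mult_ac)

lemma cotton_projections_projections:
  assumes "pair Z X = 1"
  shows "\<forall>e\<in>set (cotton_projections X Z). linear e \<and> (\<forall>v. e (e v) = e v)"
proof -
  have "\<forall>e\<in>set (cotton_projections X Z). linear e"
    unfolding cotton_projections_def
    by (auto intro!: linearI simp: vec_eq_iff algebra_simps sum.distrib sum_distrib_left)
  moreover have "\<forall>e\<in>set (cotton_projections X Z). \<forall>v. e (e v) = e v"
    using assms unfolding cotton_projections_def
    by (simp add: vec_eq_iff sum_contract_pair pair_commute[of X])
  ultimately show ?thesis by blast
qed

lemma cotton_projections_commute:
  "\<forall>e\<in>set (cotton_projections X Z). \<forall>e'\<in>set (cotton_projections X Z). \<forall>v. e (e' v) = e' (e v)"
  unfolding cotton_projections_def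
  by (simp add: vec_eq_iff sum_distrib_left) (intro conjI allI; subst sum.swap; simp add: mult_ac)

lemma Weyl_space_lincomb:
  fixes x y :: "real^'n^'n^'n^('n::finite)"
  assumes x: "x \<in> Weyl_space" and y: "y \<in> Weyl_space"
  shows "a *\<^sub>R x + b *\<^sub>R y \<in> Weyl_space"
proof -
  from x have sx: "\<And>i j k l. x$i$j$k$l = - x$j$i$k$l"
    and bx: "\<And>i j k l. x$i$j$k$l + x$j$l$k$i + x$l$i$k$j = 0"
    and t1x: "\<And>i j. (\<Sum>k\<in>UNIV. x$i$j$k$k) = 0"
    and t2x: "\<And>j l. (\<Sum>k\<in>UNIV. x$k$j$k$l) = 0"
    and t3x: "\<And>i l. (\<Sum>k\<in>UNIV. x$i$k$k$l) = 0"
    unfolding Weyl_space_def by blast+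
  from y have sy: "\<And>i j k l. y$i$j$k$l = - y$j$i$k$l"
    and by': "\<And>i j k l. y$i$j$k$l + y$j$l$k$i + y$l$i$k$j = 0"
    and t1y: "\<And>i j. (\<Sum>k\<in>UNIV. y$i$j$k$k) = 0"
    and t2y: "\<And>j l. (\<Sum>k\<in>UNIV. y$k$j$k$l) = 0"
    and t3y: "\<And>i l. (\<Sum>k\<in>UNIV. y$i$k$k$l) = 0"
    unfolding Weyl_space_def by blast+
  let ?z = "a *\<^sub>R x + b *\<^sub>R y"
  have skew: "?z$i$j$k$l = - ?z$j$i$k$l" for i j k l
    using sx[of i j k l] sy[of i j k l] by simp
  have bianchi: "?z$i$j$k$l + ?z$j$l$k$i + ?z$l$i$k$j = 0" for i j k l
  proof -
    have "?z$i$j$k$l + ?z$j$l$k$i + ?z$l$i$k$j = a * (x$i$j$k$l + x$j$l$k$i + x$l$i$k$j) + b * (y$i$j$k$l + y$j$l$k$i + y$l$i$k$j)"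
      by (simp add: algebra_simps)
    then show ?thesis by (simp only: bx by')
  qed
  have t1: "(\<Sum>k\<in>UNIV. ?z$i$j$k$k) = 0" for i j
    using t1x[of i j] t1y[of i j] by (simp add: sum.distrib sum_distrib_left[symmetric])
  have t2: "(\<Sum>k\<in>UNIV. ?z$k$j$k$l) = 0" for j l
    using t2x[of j l] t2y[of j l] by (simp add: sum.distrib sum_distrib_left[symmetric])
  have t3: "(\<Sum>k\<in>UNIV. ?z$i$k$k$l) = 0" for i l
    using t3x[of i l] t3y[of i l] by (simp add: sum.distrib sum_distrib_left[symmetric])
  show ?thesis unfolding Weyl_space_def using skew bianchi t1 t2 t3 by blast
qed

lemma subspace_Weyl_space: "subspace (Weyl_space :: (real^'n^'n^'n^('n::finite)) set)"
  unfolding subspace_def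
proof (intro conjI ballI allI)
  show "0 \<in> Weyl_space" unfolding Weyl_space_def by simp
  fix x y :: "real^'n^'n^'n^'n" assume "x \<in> Weyl_space" "y \<in> Weyl_space"
  then show "x + y \<in> Weyl_space" using Weyl_space_lincomb[of x y 1 1] by simp
next
  fix c and x :: "real^'n^'n^'n^'n" assume "x \<in> Weyl_space"
  then show "c *\<^sub>R x \<in> Weyl_space" using Weyl_space_lincomb[of x x c 0] by simp
qed

lemma act_weyl_skew:
  assumes skew: "\<And>i j k l. R$i$j$k$l = - R$j$i$k$l"
  shows "act_weyl B R $i$j$k$l = - act_weyl B R $j$i$k$l"
proof -
  have "\<And>m. R$j$i$m$l = - R$i$j$m$l" "\<And>m. R$m$i$k$l = - R$i$m$k$l"
    "\<And>m. R$j$m$k$l = - R$m$j$k$l" "\<And>m. R$j$i$k$m = - R$i$j$k$m"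
    by (rule skew)+
  then show ?thesis by (simp add: act_weyl_def sum_negf)
qed

lemma act_weyl_bianchi:
  assumes bianchi: "\<And>i j k l. R$i$j$k$l + R$j$l$k$i + R$l$i$k$j = 0"
  shows "act_weyl B R $i$j$k$l + act_weyl B R $j$l$k$i + act_weyl B R $l$i$k$j = 0"
proof -
  have "(\<Sum>m\<in>UNIV. B$k$m * (R$i$j$m$l + R$j$l$m$i + R$l$i$m$j)) = 0"
    "(\<Sum>m\<in>UNIV. B$m$i * (R$m$j$k$l + R$j$l$k$m + R$l$m$k$j)) = 0"
    "(\<Sum>m\<in>UNIV. B$m$j * (R$i$m$k$l + R$m$l$k$i + R$l$i$k$m)) = 0"
    "(\<Sum>m\<in>UNIV. B$m$l * (R$i$j$k$m + R$j$m$k$i + R$m$i$k$j)) = 0"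
    using bianchi by simp_all
  then show ?thesis by (simp add: act_weyl_def distrib_left sum.distrib)
qed

text \<open>In each contraction the two terms of \<open>act_weyl\<close> acting on the contracted slots cancel
  after exchanging the order of summation; the others vanish since \<open>R\<close> is trace-free.\<close>
lemma act_weyl_trace_free:
  assumes t1: "\<And>i j. (\<Sum>k\<in>UNIV. R$i$j$k$k) = 0"
    and t2: "\<And>j l. (\<Sum>k\<in>UNIV. R$k$j$k$l) = 0"
    and t3: "\<And>i l. (\<Sum>k\<in>UNIV. R$i$k$k$l) = 0"
  shows "(\<Sum>k\<in>UNIV. act_weyl B R $i$j$k$k) = 0"
    and "(\<Sum>k\<in>UNIV. act_weyl B R $k$j$k$l) = 0"
    and "(\<Sum>k\<in>UNIV. act_weyl B R $i$k$k$l) = 0"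
proof -
  have "(\<Sum>k\<in>UNIV. \<Sum>m\<in>UNIV. B$m$i * R$m$j$k$k) = 0" "(\<Sum>k\<in>UNIV. \<Sum>m\<in>UNIV. B$m$j * R$i$m$k$k) = 0"
    by (subst sum.swap, simp add: t1 flip: sum_distrib_left)+
  moreover have "(\<Sum>k\<in>UNIV. \<Sum>m\<in>UNIV. B$k$m * R$i$j$m$k) = (\<Sum>k\<in>UNIV. \<Sum>m\<in>UNIV. B$m$k * R$i$j$k$m)"
    by (rule sum.swap)
  ultimately show "(\<Sum>k\<in>UNIV. act_weyl B R $i$j$k$k) = 0"
    by (simp add: act_weyl_def sum_subtractf)
next
  have "(\<Sum>k\<in>UNIV. \<Sum>m\<in>UNIV. B$m$j * R$k$m$k$l) = 0" "(\<Sum>k\<in>UNIV. \<Sum>m\<in>UNIV. B$m$l * R$k$j$k$m) = 0"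
    by (subst sum.swap, simp add: t2 flip: sum_distrib_left)+
  moreover have "(\<Sum>k\<in>UNIV. \<Sum>m\<in>UNIV. B$k$m * R$k$j$m$l) = (\<Sum>k\<in>UNIV. \<Sum>m\<in>UNIV. B$m$k * R$m$j$k$l)"
    by (rule sum.swap)
  ultimately show "(\<Sum>k\<in>UNIV. act_weyl B R $k$j$k$l) = 0"
    by (simp add: act_weyl_def sum_subtractf)
next
  have "(\<Sum>k\<in>UNIV. \<Sum>m\<in>UNIV. B$m$i * R$m$k$k$l) = 0" "(\<Sum>k\<in>UNIV. \<Sum>m\<in>UNIV. B$m$l * R$i$k$k$m) = 0"
    by (subst sum.swap, simp add: t3 flip: sum_distrib_left)+
  moreover have "(\<Sum>k\<in>UNIV. \<Sum>m\<in>UNIV. B$k$m * R$i$k$m$l) = (\<Sum>k\<in>UNIV. \<Sum>m\<in>UNIV. B$m$k * R$i$m$k$l)"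
    by (rule sum.swap)
  ultimately show "(\<Sum>k\<in>UNIV. act_weyl B R $i$k$k$l) = 0"
    by (simp add: act_weyl_def sum_subtractf)
qed

lemma act_weyl_preserves_Weyl_space:
  fixes B :: "real^'n^('n::finite)"
  shows "act_weyl B ` Weyl_space \<subseteq> Weyl_space"
proof (rule image_subsetI)
  fix R :: "real^'n^'n^'n^'n" assume "R \<in> Weyl_space"
  then have skew: "\<And>i j k l. R$i$j$k$l = - R$j$i$k$l"
    and bianchi: "\<And>i j k l. R$i$j$k$l + R$j$l$k$i + R$l$i$k$j = 0"
    and t1: "\<And>i j. (\<Sum>k\<in>UNIV. R$i$j$k$k) = 0"
    and t2: "\<And>j l. (\<Sum>k\<in>UNIV. R$k$j$k$l) = 0"
    and t3: "\<And>i l. (\<Sum>k\<in>UNIV. R$i$k$k$l) = 0"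
    unfolding Weyl_space_def by blast+
  show "act_weyl B R \<in> Weyl_space"
    unfolding Weyl_space_def mem_Collect_eq
    using act_weyl_skew[OF skew] act_weyl_bianchi[OF bianchi] act_weyl_trace_free[OF t1 t2 t3]
    by blast
qed

lemma Cotton_space_lincomb:
  fixes x y :: "real^'n^'n^('n::finite)"
  assumes x: "x \<in> Cotton_space" and y: "y \<in> Cotton_space"
  shows "a *\<^sub>R x + b *\<^sub>R y \<in> Cotton_space"
proof -
  from x have sx: "\<And>i j l. x$i$j$l = - x$j$i$l"
    and bx: "\<And>i j l. x$i$j$l + x$j$l$i + x$l$i$j = 0"
    unfolding Cotton_space_def by blast+
  from y have sy: "\<And>i j l. y$i$j$l = - y$j$i$l"
    and by': "\<And>i j l. y$i$j$l + y$j$l$i + y$l$i$j = 0"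
    unfolding Cotton_space_def by blast+
  let ?z = "a *\<^sub>R x + b *\<^sub>R y"
  have skew: "?z$i$j$l = - ?z$j$i$l" for i j l
    using sx[of i j l] sy[of i j l] by simp
  have cyclic: "?z$i$j$l + ?z$j$l$i + ?z$l$i$j = 0" for i j l
  proof -
    have "?z$i$j$l + ?z$j$l$i + ?z$l$i$j = a * (x$i$j$l + x$j$l$i + x$l$i$j) + b * (y$i$j$l + y$j$l$i + y$l$i$j)"
      by (simp add: algebra_simps)
    then show ?thesis by (simp only: bx by')
  qed
  show ?thesis unfolding Cotton_space_def using skew cyclic by blast
qed

lemma subspace_Cotton_space: "subspace (Cotton_space :: (real^'n^'n^('n::finite)) set)"
  unfolding subspace_def
proof (intro conjI ballI allI)
  show "0 \<in> Cotton_space" unfolding Cotton_space_def by simp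
  fix x y :: "real^'n^'n^'n" assume "x \<in> Cotton_space" "y \<in> Cotton_space"
  then show "x + y \<in> Cotton_space" using Cotton_space_lincomb[of x y 1 1] by simp
next
  fix c and x :: "real^'n^'n^'n" assume "x \<in> Cotton_space"
  then show "c *\<^sub>R x \<in> Cotton_space" using Cotton_space_lincomb[of x x c 0] by simp
qed

lemma act_cotton_preserves_Cotton_space:
  fixes B :: "real^'n^('n::finite)"
  shows "act_cotton B ` Cotton_space \<subseteq> Cotton_space"
proof (rule image_subsetI)
  fix C :: "real^'n^'n^'n" assume "C \<in> Cotton_space"
  then have skew: "\<And>i j l. C$i$j$l = - C$j$i$l"
    and cyclic: "\<And>i j l. C$i$j$l + C$j$l$i + C$l$i$j = 0"
    unfolding Cotton_space_def by blast+
  let ?f = "act_cotton B C"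
  have "?f$i$j$l = - ?f$j$i$l" for i j l
  proof -
    have "\<And>m. C$m$i$l = - C$i$m$l" "\<And>m. C$j$m$l = - C$m$j$l" "\<And>m. C$j$i$m = - C$i$j$m"
      by (rule skew)+
    then show ?thesis by (simp add: act_cotton_def sum_negf)
  qed
  moreover have "?f$i$j$l + ?f$j$l$i + ?f$l$i$j = 0" for i j l
  proof -
    have "(\<Sum>m\<in>UNIV. B$m$i * (C$m$j$l + C$j$l$m + C$l$m$j)) = 0"
      "(\<Sum>m\<in>UNIV. B$m$j * (C$i$m$l + C$m$l$i + C$l$i$m)) = 0"
      "(\<Sum>m\<in>UNIV. B$m$l * (C$i$j$m + C$j$m$i + C$m$i$j)) = 0"
      using cyclic by simp_all
    then show ?thesis by (simp add: act_cotton_def distrib_left sum.distrib)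
  qed
  ultimately show "?f \<in> Cotton_space" unfolding Cotton_space_def by blast
qed

lemma act_weyl_spectrum:
  assumes "pair Z X = 1"
  shows "diagonalizable_on Weyl_space (act_weyl (ad_m1_mat (brk (g1 Z) (gm1 X))))"
    and "W_ss Weyl_space (act_weyl (ad_m1_mat (brk (g1 Z) (gm1 X)))) = {0}"
    and "W_st Weyl_space (act_weyl (ad_m1_mat (brk (g1 Z) (gm1 X)))) = {0}"
proof -
  note spectrum = scaled_id_plus_projections_spectrum[OF act_weyl_eq_id_plus_projections[OF assms]
      subspace_Weyl_space act_weyl_preserves_Weyl_space
      weyl_projections_projections[OF assms] weyl_projections_commute]
  show "diagonalizable_on Weyl_space (act_weyl (ad_m1_mat (brk (g1 Z) (gm1 X))))"
    by (rule spectrum(1))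
  have "\<mu> > 0" if "v \<noteq> 0" "act_weyl (ad_m1_mat (brk (g1 Z) (gm1 X))) v = \<mu> *\<^sub>R v" for v \<mu>
    using spectrum(2)[OF that] by simp
  then show "W_ss Weyl_space (act_weyl (ad_m1_mat (brk (g1 Z) (gm1 X)))) = {0}"
    and "W_st Weyl_space (act_weyl (ad_m1_mat (brk (g1 Z) (gm1 X)))) = {0}"
    by (rule W_ss_W_st_eq_zero_if_eigenvalues_pos; simp)+
qed

lemma act_cotton_spectrum:
  assumes "pair Z X = 1"
  shows "diagonalizable_on Cotton_space (act_cotton (ad_m1_mat (brk (g1 Z) (gm1 X))))"
    and "W_ss Cotton_space (act_cotton (ad_m1_mat (brk (g1 Z) (gm1 X)))) = {0}"
    and "W_st Cotton_space (act_cotton (ad_m1_mat (brk (g1 Z) (gm1 X)))) = {0}"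
proof -
  note spectrum = scaled_id_plus_projections_spectrum[OF act_cotton_eq_id_plus_projections[OF assms]
      subspace_Cotton_space act_cotton_preserves_Cotton_space
      cotton_projections_projections[OF assms] cotton_projections_commute]
  show "diagonalizable_on Cotton_space (act_cotton (ad_m1_mat (brk (g1 Z) (gm1 X))))"
    by (rule spectrum(1))
  have "\<mu> > 0" if "v \<noteq> 0" "act_cotton (ad_m1_mat (brk (g1 Z) (gm1 X))) v = \<mu> *\<^sub>R v" for v \<mu>
    using spectrum(2)[OF that] by simp
  then show "W_ss Cotton_space (act_cotton (ad_m1_mat (brk (g1 Z) (gm1 X)))) = {0}"
    and "W_st Cotton_space (act_cotton (ad_m1_mat (brk (g1 Z) (gm1 X)))) = {0}"
    by (rule W_ss_W_st_eq_zero_if_eigenvalues_pos; simp)+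
qed

theorem lemma3p2:
  fixes Z :: "real^'n::finite"
  assumes n2: "CARD('n) \<ge> 2"
    and Z0: "Z \<noteq> 0"
  shows "Cset Z = {0} \<and> Cset Z \<subseteq> Fset Z \<and> Fset Z = {X. pair Z X = 0}
    \<and> Tset Z = {X. pair Z X = 1}
    \<and> (\<forall>X\<in>Tset Z.
          diagonalizable_on UNIV (ad_m1 (brk (g1 Z) (gm1 X)))
        \<and> (\<forall>c v. v \<noteq> 0 \<and> ad_m1 (brk (g1 Z) (gm1 X)) v = c *\<^sub>R v \<longrightarrow> c \<le> 0)
        \<and> {v. ad_m1 (brk (g1 Z) (gm1 X)) v = 0} = Cset Z)
    \<and> (if CARD('n) > 2 then
          (\<forall>X\<in>Tset Z.
              diagonalizable_on Weyl_space (act_weyl (ad_m1_mat (brk (g1 Z) (gm1 X))))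
            \<and> W_ss Weyl_space (act_weyl (ad_m1_mat (brk (g1 Z) (gm1 X)))) = {0})
        \<and> (\<Inter>X\<in>Tset Z. W_st Weyl_space (act_weyl (ad_m1_mat (brk (g1 Z) (gm1 X))))) = {0}
       else
          (\<forall>X\<in>Tset Z.
              diagonalizable_on Cotton_space (act_cotton (ad_m1_mat (brk (g1 Z) (gm1 X))))
            \<and> W_ss Cotton_space (act_cotton (ad_m1_mat (brk (g1 Z) (gm1 X)))) = {0})
        \<and> (\<Inter>X\<in>Tset Z. W_st Cotton_space (act_cotton (ad_m1_mat (brk (g1 Z) (gm1 X))))) = {0})"
proof -
  note C = Cset_eq[OF Z0] and T = Tset_eq[OF Z0]
  obtain b where "Z $ b \<noteq> 0" using Z0 by (auto simp: vec_eq_iff)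
  then have "axis b (1 / Z $ b) \<in> Tset Z" by (simp add: T pair_axis)
  then have T_nonempty: "Tset Z \<noteq> {}" by blast
  have ad: "diagonalizable_on UNIV (ad_m1 (brk (g1 Z) (gm1 X)))
      \<and> (\<forall>c v. v \<noteq> 0 \<and> ad_m1 (brk (g1 Z) (gm1 X)) v = c *\<^sub>R v \<longrightarrow> c \<le> 0)
      \<and> {v. ad_m1 (brk (g1 Z) (gm1 X)) v = 0} = Cset Z" if "X \<in> Tset Z" for X
  proof -
    from that have X: "pair Z X = 1" by (simp add: T)
    have "v = 0" if "ad_m1 (brk (g1 Z) (gm1 X)) v = 0" for v
      using ad_m1_spectrum(2)[OF X, of v 0] that by force
    then show ?thesis
      using ad_m1_spectrum[OF X] by (force simp: C ad_m1_brk_g1_gm1)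
  qed
  have weyl: "(\<forall>X\<in>Tset Z.
        diagonalizable_on Weyl_space (act_weyl (ad_m1_mat (brk (g1 Z) (gm1 X))))
      \<and> W_ss Weyl_space (act_weyl (ad_m1_mat (brk (g1 Z) (gm1 X)))) = {0})
    \<and> (\<Inter>X\<in>Tset Z. W_st Weyl_space (act_weyl (ad_m1_mat (brk (g1 Z) (gm1 X))))) = {0}"
    using act_weyl_spectrum[of Z] T_nonempty unfolding T by auto
  have cotton: "(\<forall>X\<in>Tset Z.
        diagonalizable_on Cotton_space (act_cotton (ad_m1_mat (brk (g1 Z) (gm1 X))))
      \<and> W_ss Cotton_space (act_cotton (ad_m1_mat (brk (g1 Z) (gm1 X)))) = {0})
    \<and> (\<Inter>X\<in>Tset Z. W_st Cotton_space (act_cotton (ad_m1_mat (brk (g1 Z) (gm1 X))))) = {0}"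
    using act_cotton_spectrum[of Z] T_nonempty unfolding T by auto
  \<comment> \<open>Both branches of the case split hold for every \<open>n\<close>, so \<open>n2\<close> is not needed.\<close>
  show ?thesis
    using C Fset_eq[of Z] T ad weyl cotton by simp
qed

end
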